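(* Let $\bm{f}:\mathbb{R}^n\to\mathbb{R}^n$ be twice differentiable, let $\hat{\bm{y}}^n\in\mathbb{R}^n$, $s\ge1$ an integer, $\varepsilon\ge0$, and $\epsilon>0$ a constant. For $\Delta t>0$ consider the mixed-precision RKC step $$\hat{\bm{d}}_0=\bm{0},\quad \hat{\bm{d}}_1=\mu_1\Delta t\bm{f}(\hat{\bm{y}}^n),\quad \hat{\bm{d}}_j=\nu_j\hat{\bm{d}}_{j-1}+\kappa_j\hat{\bm{d}}_{j-2}+\mu_j\Delta t\big(\bm{f}(\hat{\bm{y}}^n)+\hat\Delta\bm{f}_{j-1}\big)+\gamma_j\Delta t\bm{f}(\hat{\bm{y}}^n),\ j=2,\dots,s,\quad \hat{\bm{y}}^{n+1}=\hat{\bm{y}}^n+\hat{\bm{d}}_s,$$ where $\hat\Delta\bm{f}_1,\dots,\hat\Delta\bm{f}_{s-1}\in\mathbb{R}^n$ are given vectors (which may depend on $\Delta t$ and on previous stages), and $\Delta\bm{f}_j:=\bm{f}(\hat{\bm{y}}^n+\hat{\bm{d}}_j)-\bm{f}(\hat{\bm{y}}^n)$. (a) If the coefficients are the order-$p$ RKC coefficients with $p=1$ or $p=2$ (with $s\ge2$ if $p=2$), and $\hat\Delta\bm{f}_j=\Delta\bm{f}_j+O(\epsilon\Delta t)$ as $\Delta t\to0$ for all $j$, then $$\hat{\bm{y}}^{n+1}=\hat{\bm{y}}^n+\Delta t\bm{f}(\hat{\bm{y}}^n)+O(\epsilon\Delta t^2+\Delta t^2)\quad\text{as }\Delta t\to0.$$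 (b) If the coefficients are the RKC coefficients with $p=2$ ($s\ge2$) and $\hat\Delta\bm{f}_j=\Delta\bm{f}_j+O(\Delta t^2)$ as $\Delta t\to0$ for all $j$, then $$\hat{\bm{y}}^{n+1}=\hat{\bm{y}}^n+\Delta t\bm{f}(\hat{\bm{y}}^n)+\tfrac12\Delta t^2\bm{f}'(\hat{\bm{y}}^n)\bm{f}(\hat{\bm{y}}^n)+O(\Delta t^3)\quad\text{as }\Delta t\to0.$$
   Context: All $O(\cdot)$ are as $\Delta t\to0$ with $\bm{f}$, $\hat{\bm{y}}^n$, $s$, $\varepsilon$, $\epsilon$ fixed. Chebyshev polynomials $T_0=1$, $T_1=x$, $T_j=2xT_{j-1}-T_{j-2}$. Order-$p$ RKC coefficients with $s$ stages and damping $\varepsilon$: $\omega_0=1+\varepsilon/s^2$. If $p=1$: $\omega_1=T_s(\omega_0)/T_s'(\omega_0)$, $b_j=1/T_j(\omega_0)$, $j=0,\dots,s$. If $p=2$: $\omega_1=T_s'(\omega_0)/T_s''(\omega_0)$, $b_j=T_j''(\omega_0)/T_j'(\omega_0)^2$ for $j=2,\dots,s$, $b_0=b_1=b_2$. Then $a_j=1-b_jT_j(\omega_0)$; $\mu_1=b_1\omega_1$; for $j=2,\dots,s$: $\mu_j=2\omega_1b_j/b_{j-1}$, $\nu_j=2\omega_0b_j/b_{j-1}$, $\kappa_j=-b_j/b_{j-2}$, $\gamma_j=-\mu_ja_{j-1}$. *)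

theory Defs
  imports "HOL-Analysis.Analysis" "HOL-Library.Landau_Symbols"
begin

fun cheb :: "nat \<Rightarrow> real \<Rightarrow> real" where
  "cheb 0 x = 1"
| "cheb (Suc 0) x = x"
| "cheb (Suc (Suc j)) x = 2 * x * cheb (Suc j) x - cheb j x"

definition cheb1 :: "nat \<Rightarrow> real \<Rightarrow> real" where
  "cheb1 j x = deriv (cheb j) x"

definition cheb2 :: "nat \<Rightarrow> real \<Rightarrow> real" where
  "cheb2 j x = deriv (deriv (cheb j)) x"

text \<open>RKC coefficients of order p with s stages and damping parameter dmp (the paper's varepsilon).\<close>
definition rkc_w0 :: "nat \<Rightarrow> real \<Rightarrow> real" where
  "rkc_w0 s dmp = 1 + dmp / (real s)^2"

definition rkc_w1 :: "nat \<Rightarrow> nat \<Rightarrow> real \<Rightarrow> real" where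
  "rkc_w1 p s dmp =
     (if p = 1 then cheb s (rkc_w0 s dmp) / cheb1 s (rkc_w0 s dmp)
      else cheb1 s (rkc_w0 s dmp) / cheb2 s (rkc_w0 s dmp))"

definition rkc_b :: "nat \<Rightarrow> nat \<Rightarrow> real \<Rightarrow> nat \<Rightarrow> real" where
  "rkc_b p s dmp j =
     (if p = 1 then 1 / cheb j (rkc_w0 s dmp)
      else (let k = max j 2 in cheb2 k (rkc_w0 s dmp) / (cheb1 k (rkc_w0 s dmp))^2))"

definition rkc_a :: "nat \<Rightarrow> nat \<Rightarrow> real \<Rightarrow> nat \<Rightarrow> real" where
  "rkc_a p s dmp j = 1 - rkc_b p s dmp j * cheb j (rkc_w0 s dmp)"

definition rkc_mu :: "nat \<Rightarrow> nat \<Rightarrow> real \<Rightarrow> nat \<Rightarrow> real" where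
  "rkc_mu p s dmp j =
     (if j = 1 then rkc_b p s dmp 1 * rkc_w1 p s dmp
      else 2 * rkc_w1 p s dmp * rkc_b p s dmp j / rkc_b p s dmp (j - 1))"

definition rkc_nu :: "nat \<Rightarrow> nat \<Rightarrow> real \<Rightarrow> nat \<Rightarrow> real" where
  "rkc_nu p s dmp j = 2 * rkc_w0 s dmp * rkc_b p s dmp j / rkc_b p s dmp (j - 1)"

definition rkc_kappa :: "nat \<Rightarrow> nat \<Rightarrow> real \<Rightarrow> nat \<Rightarrow> real" where
  "rkc_kappa p s dmp j = - rkc_b p s dmp j / rkc_b p s dmp (j - 2)"

definition rkc_gamma :: "nat \<Rightarrow> nat \<Rightarrow> real \<Rightarrow> nat \<Rightarrow> real" where
  "rkc_gamma p s dmp j = - rkc_mu p s dmp j * rkc_a p s dmp (j - 1)"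

text \<open>Stages of the mixed-precision RKC step with step size h (= Delta t).
  fhat h j is the perturbed increment hat-Delta-f_j (j = 1..s-1) used in stage j+1.
  rkc_d p s dmp f y fhat h j = hat-d_j.\<close>
fun rkc_d :: "nat \<Rightarrow> nat \<Rightarrow> real \<Rightarrow> ('a::real_vector \<Rightarrow> 'a) \<Rightarrow> 'a
              \<Rightarrow> (real \<Rightarrow> nat \<Rightarrow> 'a) \<Rightarrow> real \<Rightarrow> nat \<Rightarrow> 'a" where
  "rkc_d p s dmp f y fhat h 0 = 0"
| "rkc_d p s dmp f y fhat h (Suc 0) = (rkc_mu p s dmp 1 * h) *\<^sub>R f y"
| "rkc_d p s dmp f y fhat h (Suc (Suc j)) =
     rkc_nu p s dmp (j + 2) *\<^sub>R rkc_d p s dmp f y fhat h (Suc j)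
   + rkc_kappa p s dmp (j + 2) *\<^sub>R rkc_d p s dmp f y fhat h j
   + (rkc_mu p s dmp (j + 2) * h) *\<^sub>R (f y + fhat h (Suc j))
   + (rkc_gamma p s dmp (j + 2) * h) *\<^sub>R f y"

end

theory Submission
  imports Defs
begin

text \<open>Put \<open>c\<^sub>j = b\<^sub>j \<omega>\<^sub>1 T\<^sub>j'(\<omega>\<^sub>0)\<close> and \<open>q\<^sub>j = b\<^sub>j \<omega>\<^sub>1\<^sup>2 T\<^sub>j''(\<omega>\<^sub>0) / 2\<close>. Differentiating the
  Chebyshev recurrence once and twice shows that, for any nonzero \<open>b\<^sub>j\<close>, these numbers obey the
  recurrence of the stages with inhomogeneities \<open>\<mu>\<^sub>j + \<gamma>\<^sub>j\<close> and \<open>\<mu>\<^sub>j c\<^sub>j\<^sub>-\<^sub>1\<close>, and the choice of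
  \<open>\<omega>\<^sub>1\<close> and \<open>b\<^sub>s\<close> makes \<open>c\<^sub>s = 1\<close> and, for \<open>p = 2\<close>, \<open>q\<^sub>s = 1/2\<close>.
  Induction over the stages then gives \<open>d\<^sub>j = c\<^sub>j \<Delta>t f(y) + O(\<Delta>t\<^sup>2)\<close> when the perturbed increments
  are \<open>O(\<Delta>t)\<close> away from the exact ones, since \<open>f(y + d\<^sub>j) - f(y) = O(d\<^sub>j) = O(\<Delta>t)\<close>; and
  \<open>d\<^sub>j = c\<^sub>j \<Delta>t f(y) + q\<^sub>j \<Delta>t\<^sup>2 f'(y) f(y) + O(\<Delta>t\<^sup>3)\<close> when they are \<open>O(\<Delta>t\<^sup>2)\<close> away, since then
  \<open>f(y + d\<^sub>j) - f(y) = f'(y) d\<^sub>j + O(\<Delta>t\<^sup>2)\<close> by the second-order Taylor bound.\<close>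

fun dcheb :: "nat \<Rightarrow> real \<Rightarrow> real" where
  "dcheb 0 x = 0"
| "dcheb (Suc 0) x = 1"
| "dcheb (Suc (Suc j)) x = 2 * cheb (Suc j) x + 2 * x * dcheb (Suc j) x - dcheb j x"

fun ddcheb :: "nat \<Rightarrow> real \<Rightarrow> real" where
  "ddcheb 0 x = 0"
| "ddcheb (Suc 0) x = 0"
| "ddcheb (Suc (Suc j)) x = 4 * dcheb (Suc j) x + 2 * x * ddcheb (Suc j) x - ddcheb j x"

lemma has_real_derivative_cheb: "(cheb j has_real_derivative dcheb j x) (at x)"
proof (induction j x rule: cheb.induct)
  case (1 x)
  have "cheb 0 = (\<lambda>x. 1)" by (rule ext) simp
  then show ?case by (auto intro!: derivative_eq_intros)
next
  case (2 x)
  have "cheb (Suc 0) = (\<lambda>x. x)" by (rule ext) simp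
  then show ?case by (auto intro!: derivative_eq_intros)
next
  case (3 j x)
  have "cheb (Suc (Suc j)) = (\<lambda>x. 2 * x * cheb (Suc j) x - cheb j x)" by (rule ext) simp
  then show ?case by (auto intro!: derivative_eq_intros 3 simp: algebra_simps)
qed

lemma has_real_derivative_dcheb: "(dcheb j has_real_derivative ddcheb j x) (at x)"
proof (induction j x rule: dcheb.induct)
  case (1 x)
  have "dcheb 0 = (\<lambda>x. 0)" by (rule ext) simp
  then show ?case by (auto intro!: derivative_eq_intros)
next
  case (2 x)
  have "dcheb (Suc 0) = (\<lambda>x. 1)" by (rule ext) simp
  then show ?case by (auto intro!: derivative_eq_intros)
next
  case (3 j x)
  have "dcheb (Suc (Suc j)) = (\<lambda>x. 2 * cheb (Suc j) x + 2 * x * dcheb (Suc j) x - dcheb j x)"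
    by (rule ext) simp
  then show ?case
    by (auto intro!: derivative_eq_intros 3 has_real_derivative_cheb simp: algebra_simps)
qed

lemma cheb1_eq_dcheb: "cheb1 j x = dcheb j x"
  unfolding cheb1_def using has_real_derivative_cheb by (rule DERIV_imp_deriv)

lemma cheb2_eq_ddcheb: "cheb2 j x = ddcheb j x"
proof -
  have "deriv (cheb j) = dcheb j"
    using has_real_derivative_cheb DERIV_imp_deriv by blast
  then show ?thesis
    unfolding cheb2_def using has_real_derivative_dcheb by (simp add: DERIV_imp_deriv)
qed

lemma cheb_mono: "x \<ge> 1 \<Longrightarrow> 1 \<le> cheb j x \<and> cheb j x \<le> cheb (Suc j) x"
proof (induction j)
  case (Suc j)
  have "2 * cheb (Suc j) x \<le> 2 * x * cheb (Suc j) x"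
    using Suc by (simp add: mult_right_mono)
  then show ?case using Suc unfolding cheb.simps by linarith
qed simp

lemma dcheb_mono: "x \<ge> 1 \<Longrightarrow> 0 \<le> dcheb j x \<and> dcheb j x + 1 \<le> dcheb (Suc j) x"
proof (induction j)
  case (Suc j)
  have "2 * dcheb (Suc j) x \<le> 2 * x * dcheb (Suc j) x"
    using Suc by (simp add: mult_right_mono)
  then show ?case using Suc cheb_mono[OF Suc.prems, of "Suc j"] unfolding dcheb.simps by linarith
qed simp

lemma ddcheb_mono: "x \<ge> 1 \<Longrightarrow> 0 \<le> ddcheb j x \<and> ddcheb j x \<le> ddcheb (Suc j) x"
proof (induction j)
  case (Suc j)
  have "2 * ddcheb (Suc j) x \<le> 2 * x * ddcheb (Suc j) x"
    using Suc by (simp add: mult_right_mono)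
  then show ?case using Suc dcheb_mono[OF Suc.prems, of "Suc j"] unfolding ddcheb.simps by linarith
qed simp

lemma cheb_ge_1: "x \<ge> 1 \<Longrightarrow> cheb j x \<ge> 1"
  using cheb_mono by blast

lemma dcheb_ge_1: "x \<ge> 1 \<Longrightarrow> j \<ge> 1 \<Longrightarrow> dcheb j x \<ge> 1"
  using dcheb_mono[of x "j - 1"] by (cases j) auto

lemma ddcheb_pos: "x \<ge> 1 \<Longrightarrow> j \<ge> 2 \<Longrightarrow> ddcheb j x > 0"
proof (induction j rule: induct_nat_012)
  case (ge2 j)
  have "ddcheb (Suc j) x \<le> 2 * x * ddcheb (Suc j) x" "ddcheb j x \<le> ddcheb (Suc j) x"
    using ge2.prems ddcheb_mono[of x] by (auto intro: mult_right_mono[of 1 "2 * x", simplified])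
  moreover have "dcheb (Suc j) x \<ge> 1"
    using dcheb_ge_1 ge2.prems by simp
  ultimately show ?case unfolding ddcheb.simps by linarith
qed auto

lemma rkc_w0_ge_1: "dmp \<ge> 0 \<Longrightarrow> rkc_w0 s dmp \<ge> 1"
  by (simp add: rkc_w0_def)

lemma rkc_b_nonzero:
  assumes "dmp \<ge> 0"
  shows "rkc_b p s dmp j \<noteq> 0"
proof -
  have "rkc_w0 s dmp \<ge> 1"
    using assms by (rule rkc_w0_ge_1)
  then have "cheb j (rkc_w0 s dmp) \<ge> 1" "dcheb (max j 2) (rkc_w0 s dmp) \<ge> 1"
    "ddcheb (max j 2) (rkc_w0 s dmp) > 0"
    by (auto intro: cheb_ge_1 dcheb_ge_1 ddcheb_pos)
  then show ?thesis
    by (simp add: rkc_b_def cheb1_eq_dcheb cheb2_eq_ddcheb Let_def)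
qed

definition rkc_c :: "nat \<Rightarrow> nat \<Rightarrow> real \<Rightarrow> nat \<Rightarrow> real" where
  "rkc_c p s dmp j = rkc_b p s dmp j * rkc_w1 p s dmp * dcheb j (rkc_w0 s dmp)"

definition rkc_q :: "nat \<Rightarrow> nat \<Rightarrow> real \<Rightarrow> nat \<Rightarrow> real" where
  "rkc_q p s dmp j = rkc_b p s dmp j * (rkc_w1 p s dmp)\<^sup>2 * ddcheb j (rkc_w0 s dmp) / 2"

lemma rkc_c_0 [simp]: "rkc_c p s dmp 0 = 0"
  by (simp add: rkc_c_def)

lemma rkc_c_1 [simp]: "rkc_c p s dmp (Suc 0) = rkc_mu p s dmp (Suc 0)"
  by (simp add: rkc_c_def rkc_mu_def)

lemma rkc_q_0 [simp]: "rkc_q p s dmp 0 = 0"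
  by (simp add: rkc_q_def)

lemma rkc_q_1 [simp]: "rkc_q p s dmp (Suc 0) = 0"
  by (simp add: rkc_q_def)

lemma rkc_c_Suc_Suc:
  assumes "dmp \<ge> 0"
  shows "rkc_c p s dmp (Suc (Suc j)) =
           rkc_nu p s dmp (j + 2) * rkc_c p s dmp (Suc j) + rkc_kappa p s dmp (j + 2) * rkc_c p s dmp j
         + rkc_mu p s dmp (j + 2) + rkc_gamma p s dmp (j + 2)"
  using rkc_b_nonzero[OF assms, of p s j] rkc_b_nonzero[OF assms, of p s "Suc j"]
  by (simp add: rkc_c_def rkc_nu_def rkc_kappa_def rkc_mu_def rkc_gamma_def rkc_a_def field_simps)

lemma rkc_q_Suc_Suc:
  assumes "dmp \<ge> 0"
  shows "rkc_q p s dmp (Suc (Suc j)) =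
           rkc_nu p s dmp (j + 2) * rkc_q p s dmp (Suc j) + rkc_kappa p s dmp (j + 2) * rkc_q p s dmp j
         + rkc_mu p s dmp (j + 2) * rkc_c p s dmp (Suc j)"
  using rkc_b_nonzero[OF assms, of p s j] rkc_b_nonzero[OF assms, of p s "Suc j"]
  by (simp add: rkc_c_def rkc_q_def rkc_nu_def rkc_kappa_def rkc_mu_def field_simps power2_eq_square)

lemma rkc_c_last:
  assumes "dmp \<ge> 0" "s \<ge> 1" "p = 1 \<or> (p = 2 \<and> s \<ge> 2)"
  shows "rkc_c p s dmp s = 1"
  using assms cheb_ge_1[of "rkc_w0 s dmp" s] dcheb_ge_1[of "rkc_w0 s dmp" s]
    ddcheb_pos[of "rkc_w0 s dmp" s] rkc_w0_ge_1[of dmp s]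
  by (auto simp: rkc_c_def rkc_b_def rkc_w1_def cheb1_eq_dcheb cheb2_eq_ddcheb max_def power2_eq_square)

lemma rkc_q_last:
  assumes "dmp \<ge> 0" "s \<ge> 2"
  shows "rkc_q 2 s dmp s = 1 / 2"
  using assms dcheb_ge_1[of "rkc_w0 s dmp" s] ddcheb_pos[of "rkc_w0 s dmp" s] rkc_w0_ge_1[of dmp s]
  by (simp add: rkc_q_def rkc_b_def rkc_w1_def cheb1_eq_dcheb cheb2_eq_ddcheb max_def power2_eq_square)

definition bigo_pow :: "(real \<Rightarrow> 'a::real_normed_vector) \<Rightarrow> nat \<Rightarrow> bool" where
  "bigo_pow u k \<longleftrightarrow> (\<exists>C. \<forall>\<^sub>F h in at_right 0. norm (u h) \<le> C * h ^ k)"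

lemma bigo_pow_iff_bigo: "bigo_pow u k \<longleftrightarrow> (\<lambda>h. norm (u h)) \<in> O[at_right 0](\<lambda>h. h ^ k)"
proof
  assume "bigo_pow u k"
  then obtain C where "\<forall>\<^sub>F h in at_right 0. norm (u h) \<le> C * h ^ k"
    unfolding bigo_pow_def by blast
  then have "\<forall>\<^sub>F h in at_right 0. norm (norm (u h)) \<le> C * norm (h ^ k)"
    using eventually_at_right_less[of 0] by eventually_elim simp
  then show "(\<lambda>h. norm (u h)) \<in> O[at_right 0](\<lambda>h. h ^ k)" by (rule bigoI)
next
  assume "(\<lambda>h. norm (u h)) \<in> O[at_right 0](\<lambda>h. h ^ k)"
  then obtain C where "\<forall>\<^sub>F h in at_right 0. norm (norm (u h)) \<le> C * norm (h ^ k)"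
    by (auto elim: landau_o.bigE)
  then have "\<forall>\<^sub>F h in at_right 0. norm (u h) \<le> C * h ^ k"
    using eventually_at_right_less[of 0] by eventually_elim simp
  then show "bigo_pow u k" unfolding bigo_pow_def by blast
qed

lemma bigo_pow_zero: "bigo_pow (\<lambda>h. 0) k"
  unfolding bigo_pow_def by (rule exI[of _ 0]) simp

lemma bigo_pow_add:
  assumes "bigo_pow u k" "bigo_pow v k"
  shows "bigo_pow (\<lambda>h. u h + v h) k"
proof -
  obtain C D where "\<forall>\<^sub>F h in at_right 0. norm (u h) \<le> C * h ^ k"
    and "\<forall>\<^sub>F h in at_right 0. norm (v h) \<le> D * h ^ k"
    using assms unfolding bigo_pow_def by blast
  then have "\<forall>\<^sub>F h in at_right 0. norm (u h + v h) \<le> (C + D) * h ^ k"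
    by eventually_elim (smt (verit) distrib_right norm_triangle_ineq)
  then show ?thesis unfolding bigo_pow_def by blast
qed

lemma bounded_linear_bigo_pow:
  assumes "bounded_linear L" "bigo_pow u k"
  shows "bigo_pow (\<lambda>h. L (u h)) k"
proof -
  obtain B where B: "B \<ge> 0" "\<And>x. norm (L x) \<le> norm x * B"
    using bounded_linear.nonneg_bounded[OF assms(1)] by blast
  obtain C where "\<forall>\<^sub>F h in at_right 0. norm (u h) \<le> C * h ^ k"
    using assms(2) unfolding bigo_pow_def by blast
  then have "\<forall>\<^sub>F h in at_right 0. norm (L (u h)) \<le> (B * C) * h ^ k"
  proof eventually_elim
    case (elim h)
    have "norm (L (u h)) \<le> B * norm (u h)" using B(2) by (simp add: mult.commute)
    also have "\<dots> \<le> B * (C * h ^ k)" using elim B(1) by (rule mult_left_mono)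
    finally show ?case by (simp add: mult.assoc)
  qed
  then show ?thesis unfolding bigo_pow_def by blast
qed

lemma bigo_pow_scaleR: "bigo_pow u k \<Longrightarrow> bigo_pow (\<lambda>h. c *\<^sub>R u h) k"
  using bounded_linear_bigo_pow[OF bounded_linear_scaleR_right] .

lemma bigo_pow_blinfun: "bigo_pow u k \<Longrightarrow> bigo_pow (\<lambda>h. blinfun_apply L (u h)) k"
  using bounded_linear_bigo_pow[OF blinfun.bounded_linear_right] .

lemma bigo_pow_lower_order:
  assumes "bigo_pow u k" "m \<le> k"
  shows "bigo_pow u m"
proof -
  obtain C where "\<forall>\<^sub>F h in at_right 0. norm (u h) \<le> C * h ^ k"
    using assms(1) unfolding bigo_pow_def by blast
  moreover have "\<forall>\<^sub>F h :: real in at_right 0. 0 < h \<and> h < 1"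
    by (simp add: eventually_at_right_field) (rule exI[of _ 1], auto)
  ultimately have "\<forall>\<^sub>F h in at_right 0. norm (u h) \<le> \<bar>C\<bar> * h ^ m"
  proof eventually_elim
    case (elim h)
    have "C * h ^ k \<le> \<bar>C\<bar> * h ^ k" using elim by (simp add: mult_right_mono)
    also have "\<dots> \<le> \<bar>C\<bar> * h ^ m" using elim assms(2) by (simp add: mult_left_mono power_decreasing)
    finally show ?case using elim by linarith
  qed
  then show ?thesis unfolding bigo_pow_def by blast
qed

lemma bigo_pow_monomial: "bigo_pow (\<lambda>h. (h ^ k * c) *\<^sub>R v) k"
proof -
  have "\<forall>\<^sub>F h in at_right 0. norm ((h ^ k * c) *\<^sub>R v) \<le> (\<bar>c\<bar> * norm v) * h ^ k"
    using eventually_at_right_less[of 0] by eventually_elim (simp add: abs_mult)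
  then show ?thesis unfolding bigo_pow_def by blast
qed

lemma bigo_pow_mult_h:
  assumes "bigo_pow u k"
  shows "bigo_pow (\<lambda>h. (c * h) *\<^sub>R u h) (k + 1)"
proof -
  obtain C where "\<forall>\<^sub>F h in at_right 0. norm (u h) \<le> C * h ^ k"
    using assms unfolding bigo_pow_def by blast
  then have "\<forall>\<^sub>F h in at_right 0. norm ((c * h) *\<^sub>R u h) \<le> (\<bar>c\<bar> * C) * h ^ (k + 1)"
    using eventually_at_right_less[of 0]
  proof eventually_elim
    case (elim h)
    have "norm ((c * h) *\<^sub>R u h) = (\<bar>c\<bar> * h) * norm (u h)" using elim by (simp add: abs_mult)
    also have "\<dots> \<le> (\<bar>c\<bar> * h) * (C * h ^ k)" using elim by (simp add: mult_left_mono)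
    finally show ?case by (simp add: algebra_simps)
  qed
  then show ?thesis unfolding bigo_pow_def by blast
qed

lemma bigo_pow_compose:
  assumes g: "\<delta> > 0" "\<And>d. norm d < \<delta> \<Longrightarrow> norm (g d) \<le> K * norm d ^ m"
    and u: "bigo_pow u k" "k > 0"
  shows "bigo_pow (\<lambda>h. g (u h)) (k * m)"
proof -
  obtain C where C: "\<forall>\<^sub>F h in at_right 0. norm (u h) \<le> C * h ^ k"
    using u(1) unfolding bigo_pow_def by blast
  have "((\<lambda>h::real. C * h ^ k) \<longlongrightarrow> C * 0 ^ k) (at_right 0)"
    by (intro tendsto_intros tendsto_mono[OF at_le]) auto
  then have "((\<lambda>h::real. C * h ^ k) \<longlongrightarrow> 0) (at_right 0)"
    using u(2) by (simp add: zero_power)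
  then have "\<forall>\<^sub>F h in at_right 0. C * h ^ k < \<delta>"
    using g(1) by (rule order_tendstoD(2))
  with C have "\<forall>\<^sub>F h in at_right 0. norm (g (u h)) \<le> (\<bar>K\<bar> * C ^ m) * h ^ (k * m)"
  proof eventually_elim
    case (elim h)
    have "norm (g (u h)) \<le> \<bar>K\<bar> * norm (u h) ^ m"
      using g(2)[of "u h"] elim by (smt (verit) abs_ge_self mult_right_mono zero_le_power norm_ge_zero)
    also have "\<dots> \<le> \<bar>K\<bar> * (C * h ^ k) ^ m"
      using elim by (intro mult_left_mono power_mono) auto
    finally show ?case by (simp add: power_mult_distrib power_mult mult.assoc)
  qed
  then show ?thesis unfolding bigo_pow_def by blast
qed

lemma differentiable_imp_local_linear_bound:
  fixes f :: "'a::real_normed_vector \<Rightarrow> 'b::real_normed_vector"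
  assumes "f differentiable (at y)"
  obtains \<delta> L where "\<delta> > 0" "L \<ge> 0" "\<And>d. norm d < \<delta> \<Longrightarrow> norm (f (y + d) - f y) \<le> L * norm d"
proof -
  obtain f' where f': "(f has_derivative f') (at y)"
    using assms differentiable_def by blast
  then obtain \<delta> where "\<delta> > 0"
    and \<delta>: "\<And>x. norm (x - y) < \<delta> \<Longrightarrow> norm (f x - f y - f' (x - y)) \<le> 1 * norm (x - y)"
    unfolding has_derivative_at_alt by (meson zero_less_one)
  obtain B where B: "B \<ge> 0" "\<And>v. norm (f' v) \<le> norm v * B"
    using bounded_linear.nonneg_bounded[OF has_derivative_bounded_linear[OF f']] by blast
  have "norm (f (y + d) - f y) \<le> (B + 1) * norm d" if "norm d < \<delta>" for d
  proof -
    have "norm (f (y + d) - f y) \<le> norm (f (y + d) - f y - f' d) + norm (f' d)"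
      by (metis diff_add_cancel norm_triangle_ineq)
    also have "\<dots> \<le> norm d + norm d * B"
      using \<delta>[of "y + d"] that B(2)[of d] by simp
    finally show ?thesis by (simp add: algebra_simps)
  qed
  with \<open>\<delta> > 0\<close> B(1) show thesis by (intro that[of \<delta> "B + 1"]) auto
qed

lemma taylor_remainder_quadratic:
  fixes f :: "'a::real_normed_vector \<Rightarrow> 'b::real_normed_vector"
  assumes f': "\<And>x. (f has_derivative blinfun_apply (Df x)) (at x)"
    and "Df differentiable (at y)"
  obtains \<delta> K where "\<delta> > 0" "\<And>d. norm d < \<delta> \<Longrightarrow> norm (f (y + d) - f y - Df y d) \<le> K * norm d ^ 2"
proof -
  obtain \<delta> L where "\<delta> > 0" "L \<ge> 0"
    and Lip: "\<And>d. norm d < \<delta> \<Longrightarrow> norm (Df (y + d) - Df y) \<le> L * norm d"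
    using differentiable_imp_local_linear_bound[OF assms(2)] by blast
  have "norm (f (y + d) - f y - Df y d) \<le> L * norm d ^ 2" if "norm d < \<delta>" for d
  proof -
    let ?S = "cball y (norm d)"
    have "norm (f (y + d) - f y - Df y ((y + d) - y)) \<le> norm ((y + d) - y) * (L * norm d)"
    proof (rule differentiable_bound_linearization[where S = ?S])
      show "y + t *\<^sub>R (y + d - y) \<in> ?S" if "t \<in> {0..1}" for t
        using that by (auto simp: dist_norm mult_left_le_one_le)
      show "(f has_derivative Df x) (at x within ?S)" for x
        using f' has_derivative_at_withinI by blast
      show "onorm (blinfun_apply (Df x) - blinfun_apply (Df y)) \<le> L * norm d" if "x \<in> ?S" for x
      proof -
        have "norm (x - y) \<le> norm d"
          using that by (simp add: dist_norm norm_minus_commute)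
        then have "norm (Df x - Df y) \<le> L * norm d"
          using Lip[of "x - y"] \<open>norm d < \<delta>\<close> \<open>L \<ge> 0\<close> by (smt (verit) add.commute diff_add_cancel mult_left_mono)
        then show ?thesis
          by (simp add: norm_blinfun.rep_eq minus_blinfun.rep_eq fun_diff_def)
      qed
    qed simp
    then show ?thesis by (simp add: power2_eq_square algebra_simps)
  qed
  with \<open>\<delta> > 0\<close> show thesis by (rule that)
qed

context
  fixes p s :: nat and dmp :: real
    and f :: "'a::real_normed_vector \<Rightarrow> 'a" and y :: 'a and fhat :: "real \<Rightarrow> nat \<Rightarrow> 'a"
  assumes dmp_nonneg: "dmp \<ge> 0"
begin

abbreviation stage :: "real \<Rightarrow> nat \<Rightarrow> 'a" where
  "stage h j \<equiv> rkc_d p s dmp f y fhat h j"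

lemma stage_remainder1_Suc_Suc:
  "stage h (Suc (Suc j)) - (h * rkc_c p s dmp (Suc (Suc j))) *\<^sub>R f y =
      rkc_nu p s dmp (j + 2) *\<^sub>R (stage h (Suc j) - (h * rkc_c p s dmp (Suc j)) *\<^sub>R f y)
    + rkc_kappa p s dmp (j + 2) *\<^sub>R (stage h j - (h * rkc_c p s dmp j) *\<^sub>R f y)
    + (rkc_mu p s dmp (j + 2) * h) *\<^sub>R fhat h (Suc j)"
  by (simp add: rkc_c_Suc_Suc[OF dmp_nonneg] algebra_simps)

lemma stage_remainder2_Suc_Suc:
  fixes G :: 'a
  shows "stage h (Suc (Suc j)) - (h * rkc_c p s dmp (Suc (Suc j))) *\<^sub>R f y
           - (h\<^sup>2 * rkc_q p s dmp (Suc (Suc j))) *\<^sub>R G =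
      rkc_nu p s dmp (j + 2) *\<^sub>R
        (stage h (Suc j) - (h * rkc_c p s dmp (Suc j)) *\<^sub>R f y - (h\<^sup>2 * rkc_q p s dmp (Suc j)) *\<^sub>R G)
    + rkc_kappa p s dmp (j + 2) *\<^sub>R
        (stage h j - (h * rkc_c p s dmp j) *\<^sub>R f y - (h\<^sup>2 * rkc_q p s dmp j) *\<^sub>R G)
    + (rkc_mu p s dmp (j + 2) * h) *\<^sub>R (fhat h (Suc j) - (h * rkc_c p s dmp (Suc j)) *\<^sub>R G)"
  by (simp add: rkc_c_Suc_Suc[OF dmp_nonneg] rkc_q_Suc_Suc[OF dmp_nonneg] algebra_simps
      power2_eq_square)

lemma stage_order1:
  assumes "bigo_pow (\<lambda>h. stage h j - (h * rkc_c p s dmp j) *\<^sub>R f y) 2"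
  shows "bigo_pow (\<lambda>h. stage h j) 1"
proof -
  have "bigo_pow (\<lambda>h. (stage h j - (h * rkc_c p s dmp j) *\<^sub>R f y)
                     + (h ^ 1 * rkc_c p s dmp j) *\<^sub>R f y) 1"
    by (intro bigo_pow_add bigo_pow_lower_order[OF assms] bigo_pow_monomial) simp
  then show ?thesis by simp
qed

lemma stage_expansion1:
  assumes f: "f differentiable (at y)"
    and fhat: "\<forall>j\<in>{1..s-1}. bigo_pow (\<lambda>h. fhat h j - (f (y + stage h j) - f y)) 1"
  shows "j \<le> s \<Longrightarrow> bigo_pow (\<lambda>h. stage h j - (h * rkc_c p s dmp j) *\<^sub>R f y) 2"
proof (induction j rule: induct_nat_012)
  case 0
  show ?case by (simp add: bigo_pow_zero)
next
  case 1
  show ?case by (simp add: mult.commute bigo_pow_zero)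
next
  case (ge2 j)
  have E1: "bigo_pow (\<lambda>h. stage h (Suc j) - (h * rkc_c p s dmp (Suc j)) *\<^sub>R f y) 2"
    and E0: "bigo_pow (\<lambda>h. stage h j - (h * rkc_c p s dmp j) *\<^sub>R f y) 2"
    using ge2 by simp_all
  obtain \<delta> L where "\<delta> > 0" "\<And>d. norm d < \<delta> \<Longrightarrow> norm (f (y + d) - f y) \<le> L * norm d ^ 1"
    using differentiable_imp_local_linear_bound[OF f] by (metis power_one_right)
  from bigo_pow_compose[OF this stage_order1[OF E1]]
  have "bigo_pow (\<lambda>h. f (y + stage h (Suc j)) - f y) 1" by simp
  moreover have "bigo_pow (\<lambda>h. fhat h (Suc j) - (f (y + stage h (Suc j)) - f y)) 1"
    using fhat ge2.prems by simp
  ultimately have "bigo_pow (\<lambda>h. fhat h (Suc j)) 1"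
    using bigo_pow_add by fastforce
  from bigo_pow_mult_h[OF this]
  have "bigo_pow (\<lambda>h. (rkc_mu p s dmp (j + 2) * h) *\<^sub>R fhat h (Suc j)) 2"
    by (simp add: numeral_2_eq_2)
  then show ?case
    unfolding stage_remainder1_Suc_Suc by (intro bigo_pow_add bigo_pow_scaleR E1 E0)
qed

lemma stage_expansion2:
  assumes f': "\<And>x. (f has_derivative blinfun_apply (Df x)) (at x)"
    and Df: "Df differentiable (at y)"
    and fhat: "\<forall>j\<in>{1..s-1}. bigo_pow (\<lambda>h. fhat h j - (f (y + stage h j) - f y)) 2"
  shows "j \<le> s \<Longrightarrow> bigo_pow (\<lambda>h. stage h j - (h * rkc_c p s dmp j) *\<^sub>R f y
                                  - (h\<^sup>2 * rkc_q p s dmp j) *\<^sub>R Df y (f y)) 3"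
proof (induction j rule: induct_nat_012)
  case 0
  show ?case by (simp add: bigo_pow_zero)
next
  case 1
  show ?case by (simp add: mult.commute bigo_pow_zero)
next
  case (ge2 j)
  let ?G = "Df y (f y)"
  have E1: "bigo_pow (\<lambda>h. stage h (Suc j) - (h * rkc_c p s dmp (Suc j)) *\<^sub>R f y
                          - (h\<^sup>2 * rkc_q p s dmp (Suc j)) *\<^sub>R ?G) 3"
    and E0: "bigo_pow (\<lambda>h. stage h j - (h * rkc_c p s dmp j) *\<^sub>R f y
                          - (h\<^sup>2 * rkc_q p s dmp j) *\<^sub>R ?G) 3"
    using ge2 by simp_all
  have "bigo_pow (\<lambda>h. (stage h (Suc j) - (h * rkc_c p s dmp (Suc j)) *\<^sub>R f y
                          - (h\<^sup>2 * rkc_q p s dmp (Suc j)) *\<^sub>R ?G)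
                     + (h ^ 2 * rkc_q p s dmp (Suc j)) *\<^sub>R ?G) 2"
    by (intro bigo_pow_add bigo_pow_lower_order[OF E1] bigo_pow_monomial) simp
  then have D: "bigo_pow (\<lambda>h. stage h (Suc j) - (h * rkc_c p s dmp (Suc j)) *\<^sub>R f y) 2"
    by simp
  obtain \<delta> K where "\<delta> > 0" "\<And>d. norm d < \<delta> \<Longrightarrow> norm (f (y + d) - f y - Df y d) \<le> K * norm d ^ 2"
    using taylor_remainder_quadratic[OF f' Df] by blast
  from bigo_pow_compose[OF this stage_order1[OF D]]
  have "bigo_pow (\<lambda>h. f (y + stage h (Suc j)) - f y - Df y (stage h (Suc j))) 2" by simp
  moreover have "bigo_pow (\<lambda>h. fhat h (Suc j) - (f (y + stage h (Suc j)) - f y)) 2"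
    using fhat ge2.prems by simp
  moreover have "bigo_pow (\<lambda>h. Df y (stage h (Suc j) - (h * rkc_c p s dmp (Suc j)) *\<^sub>R f y)) 2"
    using D by (rule bigo_pow_blinfun)
  ultimately have "bigo_pow (\<lambda>h. (fhat h (Suc j) - (f (y + stage h (Suc j)) - f y))
                       + (f (y + stage h (Suc j)) - f y - Df y (stage h (Suc j)))
                       + Df y (stage h (Suc j) - (h * rkc_c p s dmp (Suc j)) *\<^sub>R f y)) 2"
    by (intro bigo_pow_add)
  then have "bigo_pow (\<lambda>h. fhat h (Suc j) - (h * rkc_c p s dmp (Suc j)) *\<^sub>R ?G) 2"
    by (simp add: blinfun.diff_right blinfun.scaleR_right)
  from bigo_pow_mult_h[OF this]
  have "bigo_pow (\<lambda>h. (rkc_mu p s dmp (j + 2) * h) *\<^sub>R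
                        (fhat h (Suc j) - (h * rkc_c p s dmp (Suc j)) *\<^sub>R ?G)) 3" by simp
  then show ?case
    unfolding stage_remainder2_Suc_Suc by (intro bigo_pow_add bigo_pow_scaleR E1 E0)
qed

end

theorem theorem3p1:
  fixes f :: "real ^ 'n \<Rightarrow> real ^ 'n"
    and Df :: "real ^ 'n \<Rightarrow> ((real ^ 'n) \<Rightarrow>\<^sub>L (real ^ 'n))"
    and y :: "real ^ 'n"
    and s :: nat and dmp :: real and eps :: real
  assumes f_deriv: "\<And>x. (f has_derivative blinfun_apply (Df x)) (at x)"
    and Df_diff: "\<And>x. Df differentiable (at x)"
    and s_pos: "s \<ge> 1"
    and dmp_nonneg: "dmp \<ge> 0"
    and eps_pos: "eps > 0"
  shows
    "(\<forall>p fhat. (p = 1 \<or> (p = 2 \<and> s \<ge> 2)) \<and>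
        (\<forall>j\<in>{1..s-1}.
           (\<lambda>h. norm (fhat h j - (f (y + rkc_d p s dmp f y fhat h j) - f y)))
             \<in> O[at_right 0](\<lambda>h. eps * h))
      \<longrightarrow> (\<lambda>h. norm (y + rkc_d p s dmp f y fhat h s - (y + h *\<^sub>R f y)))
             \<in> O[at_right 0](\<lambda>h. eps * h^2 + h^2))
   \<and>
    (\<forall>fhat. s \<ge> 2 \<and>
        (\<forall>j\<in>{1..s-1}.
           (\<lambda>h. norm (fhat h j - (f (y + rkc_d 2 s dmp f y fhat h j) - f y)))
             \<in> O[at_right 0](\<lambda>h. h^2))
      \<longrightarrow> (\<lambda>h. norm (y + rkc_d 2 s dmp f y fhat h s
                       - (y + h *\<^sub>R f y + ((1/2) * h^2) *\<^sub>R (Df y (f y)))))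
             \<in> O[at_right 0](\<lambda>h. h^3))"
proof (intro conjI allI impI)
  fix p :: nat and fhat
  assume "(p = 1 \<or> (p = 2 \<and> s \<ge> 2)) \<and>
        (\<forall>j\<in>{1..s-1}.
           (\<lambda>h. norm (fhat h j - (f (y + rkc_d p s dmp f y fhat h j) - f y)))
             \<in> O[at_right 0](\<lambda>h. eps * h))"
  then have p: "p = 1 \<or> (p = 2 \<and> s \<ge> 2)"
    and fhat: "\<forall>j\<in>{1..s-1}. bigo_pow (\<lambda>h. fhat h j - (f (y + rkc_d p s dmp f y fhat h j) - f y)) 1"
    using eps_pos by (simp_all add: bigo_pow_iff_bigo)
  have "bigo_pow (\<lambda>h. rkc_d p s dmp f y fhat h s - (h * rkc_c p s dmp s) *\<^sub>R f y) 2"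
    using stage_expansion1[OF dmp_nonneg differentiableI[OF f_deriv] fhat] by simp
  moreover have "(\<lambda>h::real. eps * h^2 + h^2) = (\<lambda>h. (eps + 1) * h^2)"
    by (simp add: fun_eq_iff algebra_simps)
  ultimately show "(\<lambda>h. norm (y + rkc_d p s dmp f y fhat h s - (y + h *\<^sub>R f y)))
             \<in> O[at_right 0](\<lambda>h. eps * h^2 + h^2)"
    using rkc_c_last[OF dmp_nonneg s_pos p] eps_pos by (simp add: bigo_pow_iff_bigo add_pos_pos)
next
  fix fhat
  assume "s \<ge> 2 \<and>
        (\<forall>j\<in>{1..s-1}.
           (\<lambda>h. norm (fhat h j - (f (y + rkc_d 2 s dmp f y fhat h j) - f y)))
             \<in> O[at_right 0](\<lambda>h. h^2))"
  then have s: "s \<ge> 2"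
    and fhat: "\<forall>j\<in>{1..s-1}. bigo_pow (\<lambda>h. fhat h j - (f (y + rkc_d 2 s dmp f y fhat h j) - f y)) 2"
    by (simp_all add: bigo_pow_iff_bigo)
  have "bigo_pow (\<lambda>h. rkc_d 2 s dmp f y fhat h s - (h * rkc_c 2 s dmp s) *\<^sub>R f y
                        - (h\<^sup>2 * rkc_q 2 s dmp s) *\<^sub>R Df y (f y)) 3"
    using stage_expansion2[OF dmp_nonneg f_deriv Df_diff fhat] by simp
  then show "(\<lambda>h. norm (y + rkc_d 2 s dmp f y fhat h s
                       - (y + h *\<^sub>R f y + ((1/2) * h^2) *\<^sub>R (Df y (f y)))))
             \<in> O[at_right 0](\<lambda>h. h^3)"
    using rkc_c_last[OF dmp_nonneg s_pos] rkc_q_last[OF dmp_nonneg s] s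
    by (simp add: bigo_pow_iff_bigo algebra_simps)
qed

end
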